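(* Let $\mathcal{C}$ be a small category and $k$ a field. Then the trivial module $\underline{k}$ is a direct summand of $\mathrm{Res}_\tau(k\mathcal{C})$ as $kF(\mathcal{C})$-modules; i.e. $\mathrm{Res}_\tau(k\mathcal{C})\cong\underline{k}\oplus N_{\mathcal{C}}$ for some $kF(\mathcal{C})$-module $N_{\mathcal{C}}$.
   Context: Modules over a category algebra are identified with covariant functors to $\mathrm{Vect}_k$; $\underline{k}$ is the constant functor with value $k$. $\mathcal{C}^e=\mathcal{C}\times\mathcal{C}^{op}$, and $k\mathcal{C}$ is the functor $\mathcal{C}^e\to\mathrm{Vect}_k$ with $k\mathcal{C}(x,y)=k\mathrm{Hom}_{\mathcal{C}}(y,x)$ (zero if empty), $(u,v^{op})$ acting by $\alpha\mapsto u\alpha v$. The category of factorizations $F(\mathcal{C})$ has objects $[\alpha]$, $\alpha\in\mathrm{Mor}\,\mathcal{C}$; for $\alpha:y\to x$, $\alpha':y'\to x'$ a morphism $[\alpha]\to[\alpha']$ is a pair $(u,v^{op})$ with $u:x\to x'$, $v:y'\to y$ and $\alpha'=u\alpha v$. $\tau:F(\mathcal{C})\to\mathcal{C}^e$ sends $[\alpha]\mapsto(x,y)$ and $(u,v^{op})\mapsto(u,v^{op})$, and $\mathrm{Res}_\tau$ is precomposition with $\tau$. *)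

theory Defs
  imports Main "HOL-Library.Function_Algebras"
begin

text \<open>A (small) category: a set of objects, a set of arrows, domain/codomain,
identities and composition.  Comp g f is "g after f" (defined when Cod f = Dom g).\<close>

record ('o, 'a) cat =
  Obj  :: "'o set"
  Arr  :: "'a set"
  Dom  :: "'a \<Rightarrow> 'o"
  Cod  :: "'a \<Rightarrow> 'o"
  Idt  :: "'o \<Rightarrow> 'a"
  Comp :: "'a \<Rightarrow> 'a \<Rightarrow> 'a"

definition category :: "('o, 'a, 'z) cat_scheme \<Rightarrow> bool" where
  "category C \<longleftrightarrow>
     (\<forall>f\<in>Arr C. Dom C f \<in> Obj C \<and> Cod C f \<in> Obj C) \<and>
     (\<forall>x\<in>Obj C. Idt C x \<in> Arr C \<and> Dom C (Idt C x) = x \<and> Cod C (Idt C x) = x) \<and>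
     (\<forall>f\<in>Arr C. \<forall>g\<in>Arr C. Cod C f = Dom C g \<longrightarrow>
        Comp C g f \<in> Arr C \<and> Dom C (Comp C g f) = Dom C f \<and> Cod C (Comp C g f) = Cod C g) \<and>
     (\<forall>f\<in>Arr C. Comp C f (Idt C (Dom C f)) = f \<and> Comp C (Idt C (Cod C f)) f = f) \<and>
     (\<forall>f\<in>Arr C. \<forall>g\<in>Arr C. \<forall>h\<in>Arr C. Cod C f = Dom C g \<longrightarrow> Cod C g = Dom C h \<longrightarrow>
        Comp C h (Comp C g f) = Comp C (Comp C h g) f)"

definition Hom :: "('o, 'a, 'z) cat_scheme \<Rightarrow> 'o \<Rightarrow> 'o \<Rightarrow> 'a set" where
  "Hom C y x = {f \<in> Arr C. Dom C f = y \<and> Cod C f = x}"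

text \<open>Objects: the morphisms \<alpha> of C (written [\<alpha>]).  A morphism [\<alpha>] \<rightarrow> [\<alpha>'] for
  \<alpha> : y \<rightarrow> x, \<alpha>' : y' \<rightarrow> x' is a pair (u, v^op) with u : x \<rightarrow> x', v : y' \<rightarrow> y and
  \<alpha>' = u \<alpha> v.  We encode such a morphism as the triple (\<alpha>, u, v); its target
  [u \<alpha> v] is determined by the triple.\<close>

definition fact_target :: "('o, 'a, 'z) cat_scheme \<Rightarrow> 'a \<times> 'a \<times> 'a \<Rightarrow> 'a" where
  "fact_target C t = (case t of (\<alpha>, u, v) \<Rightarrow> Comp C u (Comp C \<alpha> v))"

definition FC :: "('o, 'a, 'z) cat_scheme \<Rightarrow> ('a, 'a \<times> 'a \<times> 'a) cat" where
  "FC C = \<lparr> Obj = Arr C,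
            Arr = {(\<alpha>, u, v). \<alpha> \<in> Arr C \<and> u \<in> Arr C \<and> v \<in> Arr C \<and>
                               Dom C u = Cod C \<alpha> \<and> Cod C v = Dom C \<alpha>},
            Dom = (\<lambda>(\<alpha>, u, v). \<alpha>),
            Cod = fact_target C,
            Idt = (\<lambda>\<alpha>. (\<alpha>, Idt C (Cod C \<alpha>), Idt C (Dom C \<alpha>))),
            Comp = (\<lambda>(\<alpha>', u', v') (\<alpha>, u, v). (\<alpha>, Comp C u' u, Comp C v v')) \<rparr>"

text \<open>Vector spaces over the field 'k are realised as subspaces of an ambient
  abelian group 'v with scalar multiplication sc.\<close>

definition subspace_on :: "('k::field \<Rightarrow> 'v::ab_group_add \<Rightarrow> 'v) \<Rightarrow> 'v set \<Rightarrow> bool" where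
  "subspace_on sc V \<longleftrightarrow> 0 \<in> V \<and> (\<forall>x\<in>V. \<forall>y\<in>V. x + y \<in> V) \<and> (\<forall>c. \<forall>x\<in>V. sc c x \<in> V)"

definition linear_on :: "('k::field \<Rightarrow> 'v::ab_group_add \<Rightarrow> 'v) \<Rightarrow> ('k \<Rightarrow> 'w::ab_group_add \<Rightarrow> 'w)
    \<Rightarrow> 'v set \<Rightarrow> ('v \<Rightarrow> 'w) \<Rightarrow> bool" where
  "linear_on sc1 sc2 V f \<longleftrightarrow> (\<forall>x\<in>V. \<forall>y\<in>V. f (x + y) = f x + f y) \<and>
                              (\<forall>c. \<forall>x\<in>V. f (sc1 c x) = sc2 c (f x))"

text \<open>A module over kD (D a small category): a functor D \<rightarrow> Vect_k, given by a
  vector space Mob X for each object X and a linear map Mar f for each arrow f.\<close>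

definition cat_module :: "('o, 'm, 'z) cat_scheme \<Rightarrow> ('k::field \<Rightarrow> 'v::ab_group_add \<Rightarrow> 'v)
    \<Rightarrow> ('o \<Rightarrow> 'v set) \<Rightarrow> ('m \<Rightarrow> 'v \<Rightarrow> 'v) \<Rightarrow> bool" where
  "cat_module D sc Mob Mar \<longleftrightarrow>
     (\<forall>X\<in>Obj D. subspace_on sc (Mob X)) \<and>
     (\<forall>f\<in>Arr D. (\<forall>m\<in>Mob (Dom D f). Mar f m \<in> Mob (Cod D f)) \<and> linear_on sc sc (Mob (Dom D f)) (Mar f)) \<and>
     (\<forall>X\<in>Obj D. \<forall>m\<in>Mob X. Mar (Idt D X) m = m) \<and>
     (\<forall>f\<in>Arr D. \<forall>g\<in>Arr D. Cod D f = Dom D g \<longrightarrow>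
        (\<forall>m\<in>Mob (Dom D f). Mar (Comp D g f) m = Mar g (Mar f m)))"

definition triv_ob :: "'o \<Rightarrow> 'k::field set" where "triv_ob X = UNIV"
definition triv_ar :: "'m \<Rightarrow> 'k::field \<Rightarrow> 'k" where "triv_ar f = id"

definition fsc :: "'k::field \<Rightarrow> ('a \<Rightarrow> 'k) \<Rightarrow> ('a \<Rightarrow> 'k)" where
  "fsc c f = (\<lambda>a. c * f a)"

text \<open>At [\<alpha>] with \<alpha> : y \<rightarrow> x its value is kC(x,y) = k Hom(y,x),
  realised as finitely supported functions Hom(y,x) \<rightarrow> k (zero outside).  The
  morphism (u, v^op) acts by the linear extension of \<beta> \<mapsto> u \<beta> v.\<close>

definition kC_ob :: "('o, 'a, 'z) cat_scheme \<Rightarrow> 'a \<Rightarrow> ('a \<Rightarrow> 'k::field) set" where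
  "kC_ob C \<alpha> = {f. finite {\<beta>. f \<beta> \<noteq> 0} \<and> {\<beta>. f \<beta> \<noteq> 0} \<subseteq> Hom C (Dom C \<alpha>) (Cod C \<alpha>)}"

definition kC_ar :: "('o, 'a, 'z) cat_scheme \<Rightarrow> 'a \<times> 'a \<times> 'a \<Rightarrow> ('a \<Rightarrow> 'k::field) \<Rightarrow> ('a \<Rightarrow> 'k)" where
  "kC_ar C t f = (case t of (\<alpha>, u, v) \<Rightarrow>
      (\<lambda>\<gamma>. \<Sum>\<beta>\<in>{\<beta>. f \<beta> \<noteq> 0 \<and> Comp C u (Comp C \<beta> v) = \<gamma>}. f \<beta>))"

text \<open>M \<cong> k \<oplus> N as kD-modules for some kD-module N (realised in the same ambient
  type as M): a natural isomorphism m \<mapsto> (\<epsilon> m, \<psi> m) from M to the direct sum of the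
  trivial module and N, spelled out componentwise.\<close>

definition iso_triv_plus :: "('o, 'm, 'z) cat_scheme \<Rightarrow> ('k::field \<Rightarrow> 'v::ab_group_add \<Rightarrow> 'v)
    \<Rightarrow> ('o \<Rightarrow> 'v set) \<Rightarrow> ('m \<Rightarrow> 'v \<Rightarrow> 'v) \<Rightarrow> ('o \<Rightarrow> 'v set) \<Rightarrow> ('m \<Rightarrow> 'v \<Rightarrow> 'v) \<Rightarrow> bool" where
  "iso_triv_plus D sc Mob Mar Nob Nar \<longleftrightarrow>
     (\<exists>\<epsilon> \<psi>.
       (\<forall>X\<in>Obj D. linear_on sc (*) (Mob X) (\<epsilon> X) \<and> linear_on sc sc (Mob X) (\<psi> X) \<and>
                   bij_betw (\<lambda>m. (\<epsilon> X m, \<psi> X m)) (Mob X) (triv_ob X \<times> Nob X)) \<and>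
       (\<forall>f\<in>Arr D. \<forall>m\<in>Mob (Dom D f).
          \<epsilon> (Cod D f) (Mar f m) = triv_ar f (\<epsilon> (Dom D f) m) \<and>
          \<psi> (Cod D f) (Mar f m) = Nar f (\<psi> (Dom D f) m)))"

end

theory Submission
  imports Defs HOL.Modules
begin

text \<open>Sending a linear combination of morphisms to the sum of its coefficients gives a
  linear map \<epsilon> : k\<C>(x, y) \<rightarrow> k, and it is natural on F(\<C>) because (u, v^op) maps every basis
  morphism \<beta> to the basis morphism u \<beta> v.  At the object [\<alpha>] the morphism \<alpha> is itself a
  basis element with \<epsilon>(\<alpha>) = 1, and (u, v^op) sends it to u \<alpha> v, the distinguished basis element
  at the target [u \<alpha> v].  So [\<alpha>] \<mapsto> \<alpha> is a natural section of \<epsilon>, and Res_\<tau>(k\<C>) \<cong> k \<oplus> ker \<epsilon>.\<close>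

section \<open>Splitting off the trivial module\<close>

lemma linear_on_zero: "linear_on sc sc' V f \<Longrightarrow> 0 \<in> V \<Longrightarrow> f 0 = 0"
  unfolding linear_on_def by (metis add_0 add_cancel_right_left)

lemma functional_splitting:
  fixes sc :: "'k::field \<Rightarrow> 'v::ab_group_add \<Rightarrow> 'v"
  assumes sc: "module sc" and V: "subspace_on sc V" and \<epsilon>: "linear_on sc (*) V \<epsilon>"
    and e: "e \<in> V" "\<epsilon> e = 1"
  shows "linear_on sc sc V (\<lambda>m. m + sc (- \<epsilon> m) e)"
    and "bij_betw (\<lambda>m. (\<epsilon> m, m + sc (- \<epsilon> m) e)) V (UNIV \<times> {m \<in> V. \<epsilon> m = 0})"
proof -
  interpret module sc by (fact sc)
  note closed = V[unfolded subspace_on_def] and lin = \<epsilon>[unfolded linear_on_def]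
  show "linear_on sc sc V (\<lambda>m. m + sc (- \<epsilon> m) e)"
    using lin unfolding linear_on_def by (auto simp: algebra_simps)
  show "bij_betw (\<lambda>m. (\<epsilon> m, m + sc (- \<epsilon> m) e)) V (UNIV \<times> {m \<in> V. \<epsilon> m = 0})"
  proof (rule bij_betw_imageI)
    show "inj_on (\<lambda>m. (\<epsilon> m, m + sc (- \<epsilon> m) e)) V"
      by (rule inj_onI) auto
    show "(\<lambda>m. (\<epsilon> m, m + sc (- \<epsilon> m) e)) ` V = UNIV \<times> {m \<in> V. \<epsilon> m = 0}"
    proof (intro equalityI subsetI)
      fix p assume "p \<in> (\<lambda>m. (\<epsilon> m, m + sc (- \<epsilon> m) e)) ` V"
      with closed lin e show "p \<in> UNIV \<times> {m \<in> V. \<epsilon> m = 0}"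
        by (auto simp del: scale_minus_left)
    next
      fix p :: "'k \<times> 'v" assume "p \<in> UNIV \<times> {m \<in> V. \<epsilon> m = 0}"
      then obtain c n where p: "p = (c, n)" and n: "n \<in> V" "\<epsilon> n = 0" by auto
      have "n + sc c e \<in> V" and \<epsilon>_lift: "\<epsilon> (n + sc c e) = c"
        using closed lin e n by auto
      moreover have "n + sc c e + sc (- \<epsilon> (n + sc c e)) e = n"
        unfolding \<epsilon>_lift by simp
      ultimately show "p \<in> (\<lambda>m. (\<epsilon> m, m + sc (- \<epsilon> m) e)) ` V"
        unfolding p by (metis (no_types, lifting) image_eqI)
    qed
  qed
qed

definition hom_to_triv :: "('o, 'm, 'z) cat_scheme \<Rightarrow> ('k::field \<Rightarrow> 'v::ab_group_add \<Rightarrow> 'v)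
    \<Rightarrow> ('o \<Rightarrow> 'v set) \<Rightarrow> ('m \<Rightarrow> 'v \<Rightarrow> 'v) \<Rightarrow> ('o \<Rightarrow> 'v \<Rightarrow> 'k) \<Rightarrow> bool" where
  "hom_to_triv D sc Mob Mar \<epsilon> \<longleftrightarrow>
     (\<forall>X\<in>Obj D. linear_on sc (*) (Mob X) (\<epsilon> X)) \<and>
     (\<forall>f\<in>Arr D. \<forall>m\<in>Mob (Dom D f). \<epsilon> (Cod D f) (Mar f m) = triv_ar f (\<epsilon> (Dom D f) m))"

lemma cat_module_kernel:
  assumes M: "cat_module D sc Mob Mar" and \<epsilon>: "hom_to_triv D sc Mob Mar \<epsilon>"
  shows "cat_module D sc (\<lambda>X. {m \<in> Mob X. \<epsilon> X m = 0}) Mar"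
  unfolding cat_module_def
proof (intro conjI ballI allI impI)
  fix X assume X: "X \<in> Obj D"
  with M \<epsilon> have V: "subspace_on sc (Mob X)" and lin: "linear_on sc (*) (Mob X) (\<epsilon> X)"
    unfolding cat_module_def hom_to_triv_def by auto
  with linear_on_zero[OF lin] show "subspace_on sc {m \<in> Mob X. \<epsilon> X m = 0}"
    unfolding subspace_on_def linear_on_def by auto
next
  fix f m assume "f \<in> Arr D" "m \<in> {m \<in> Mob (Dom D f). \<epsilon> (Dom D f) m = 0}"
  with M \<epsilon> show "Mar f m \<in> {m \<in> Mob (Cod D f). \<epsilon> (Cod D f) m = 0}"
    unfolding cat_module_def hom_to_triv_def triv_ar_def by auto
next
  fix f assume "f \<in> Arr D"
  with M show "linear_on sc sc {m \<in> Mob (Dom D f). \<epsilon> (Dom D f) m = 0} (Mar f)"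
    unfolding cat_module_def linear_on_def by auto
qed (use M in \<open>auto simp: cat_module_def\<close>)

lemma iso_triv_plus_kernel:
  fixes sc :: "'k::field \<Rightarrow> 'v::ab_group_add \<Rightarrow> 'v"
  assumes sc: "module sc" and D: "category D" and M: "cat_module D sc Mob Mar"
    and \<epsilon>: "hom_to_triv D sc Mob Mar \<epsilon>"
    and e: "\<And>X. X \<in> Obj D \<Longrightarrow> e X \<in> Mob X \<and> \<epsilon> X (e X) = 1"
    and e_natural: "\<And>f. f \<in> Arr D \<Longrightarrow> Mar f (e (Dom D f)) = e (Cod D f)"
  shows "iso_triv_plus D sc Mob Mar (\<lambda>X. {m \<in> Mob X. \<epsilon> X m = 0}) Mar"
  unfolding iso_triv_plus_def
proof (intro exI[of _ \<epsilon>] exI[of _ "\<lambda>X m. m + sc (- \<epsilon> X m) (e X)"] conjI ballI)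
  interpret module sc by (fact sc)
  fix X assume "X \<in> Obj D"
  with M \<epsilon> e have V: "subspace_on sc (Mob X)" and lin: "linear_on sc (*) (Mob X) (\<epsilon> X)"
    and eX: "e X \<in> Mob X" "\<epsilon> X (e X) = 1"
    unfolding cat_module_def hom_to_triv_def by auto
  show "linear_on sc (*) (Mob X) (\<epsilon> X)" by (fact lin)
  show "linear_on sc sc (Mob X) (\<lambda>m. m + sc (- \<epsilon> X m) (e X))"
    using functional_splitting(1)[OF sc V lin eX] .
  show "bij_betw (\<lambda>m. (\<epsilon> X m, m + sc (- \<epsilon> X m) (e X))) (Mob X) (triv_ob X \<times> {m \<in> Mob X. \<epsilon> X m = 0})"
    using functional_splitting(2)[OF sc V lin eX] by (simp add: triv_ob_def)
next
  interpret module sc by (fact sc)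
  fix f m assume f: "f \<in> Arr D" and m: "m \<in> Mob (Dom D f)"
  have "Dom D f \<in> Obj D" using D f by (simp add: category_def)
  with M f e have lin: "linear_on sc sc (Mob (Dom D f)) (Mar f)"
    and e_Dom: "sc c (e (Dom D f)) \<in> Mob (Dom D f)" for c
    unfolding cat_module_def subspace_on_def by blast+
  have \<epsilon>_Mar: "\<epsilon> (Cod D f) (Mar f m) = \<epsilon> (Dom D f) m"
    using \<epsilon> f m by (simp add: hom_to_triv_def triv_ar_def)
  then show "\<epsilon> (Cod D f) (Mar f m) = triv_ar f (\<epsilon> (Dom D f) m)"
    by (simp add: triv_ar_def)
  have "Mar f m + sc (- \<epsilon> (Cod D f) (Mar f m)) (e (Cod D f))
      = Mar f m + sc (- \<epsilon> (Dom D f) m) (Mar f (e (Dom D f)))"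
    using \<epsilon>_Mar e_natural[OF f] by (simp del: scale_minus_left)
  also have "\<dots> = Mar f (m + sc (- \<epsilon> (Dom D f) m) (e (Dom D f)))"
    using lin m e_Dom e[OF \<open>Dom D f \<in> Obj D\<close>] by (simp add: linear_on_def del: scale_minus_left)
  finally show "Mar f m + sc (- \<epsilon> (Cod D f) (Mar f m)) (e (Cod D f))
      = Mar f (m + sc (- \<epsilon> (Dom D f) m) (e (Dom D f)))" .
qed

section \<open>The category of factorizations\<close>

lemma Hom_comp:
  assumes "category C" "f \<in> Hom C x y" "g \<in> Hom C y z"
  shows "Comp C g f \<in> Hom C x z"
  using assms unfolding category_def Hom_def by auto

lemma Hom_assoc:
  assumes "category C" "f \<in> Hom C w x" "g \<in> Hom C x y" "h \<in> Hom C y z"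
  shows "Comp C h (Comp C g f) = Comp C (Comp C h g) f"
  using assms unfolding category_def Hom_def by auto

lemma Idt_in_Hom: "category C \<Longrightarrow> x \<in> Obj C \<Longrightarrow> Idt C x \<in> Hom C x x"
  unfolding category_def Hom_def by auto

lemma Hom_Idt_right: "category C \<Longrightarrow> f \<in> Hom C x y \<Longrightarrow> Comp C f (Idt C x) = f"
  unfolding category_def Hom_def by auto

lemma Hom_Idt_left: "category C \<Longrightarrow> f \<in> Hom C x y \<Longrightarrow> Comp C (Idt C y) f = f"
  unfolding category_def Hom_def by auto

lemma Hom_objs: "category C \<Longrightarrow> f \<in> Hom C x y \<Longrightarrow> x \<in> Obj C \<and> y \<in> Obj C"
  unfolding category_def Hom_def by auto

lemma Arr_in_Hom: "f \<in> Arr C \<Longrightarrow> f \<in> Hom C (Dom C f) (Cod C f)"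
  unfolding Hom_def by auto

lemma sandwich_in_Hom:
  assumes "category C" "\<beta> \<in> Hom C y x" "u \<in> Hom C x x'" "v \<in> Hom C y' y"
  shows "Comp C u (Comp C \<beta> v) \<in> Hom C y' x'"
  using assms by (blast intro: Hom_comp)

lemma sandwich_sandwich:
  assumes C: "category C" and \<beta>: "\<beta> \<in> Hom C y x" and u: "u \<in> Hom C x x'" and v: "v \<in> Hom C y' y"
    and u': "u' \<in> Hom C x' x''" and v': "v' \<in> Hom C y'' y'"
  shows "Comp C u' (Comp C (Comp C u (Comp C \<beta> v)) v') = Comp C (Comp C u' u) (Comp C \<beta> (Comp C v v'))"
proof -
  have \<beta>v: "Comp C \<beta> v \<in> Hom C y' x" and \<beta>vv': "Comp C \<beta> (Comp C v v') \<in> Hom C y'' x"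
    using Hom_comp[OF C] \<beta> v v' by blast+
  have "Comp C (Comp C u (Comp C \<beta> v)) v' = Comp C u (Comp C (Comp C \<beta> v) v')"
    using Hom_assoc[OF C v' \<beta>v u] by simp
  also have "\<dots> = Comp C u (Comp C \<beta> (Comp C v v'))"
    using Hom_assoc[OF C v' v \<beta>] by simp
  finally show ?thesis
    using Hom_assoc[OF C \<beta>vv' u u'] by simp
qed

lemma FC_simps:
  "Obj (FC C) = Arr C"
  "Dom (FC C) (\<alpha>, u, v) = \<alpha>"
  "Cod (FC C) (\<alpha>, u, v) = Comp C u (Comp C \<alpha> v)"
  "Idt (FC C) \<alpha> = (\<alpha>, Idt C (Cod C \<alpha>), Idt C (Dom C \<alpha>))"
  "Comp (FC C) (\<alpha>', u', v') (\<alpha>, u, v) = (\<alpha>, Comp C u' u, Comp C v v')"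
  by (simp_all add: FC_def fact_target_def)

lemma Arr_FC_iff:
  "(\<alpha>, u, v) \<in> Arr (FC C) \<longleftrightarrow>
     (\<exists>x y x' y'. \<alpha> \<in> Hom C y x \<and> u \<in> Hom C x x' \<and> v \<in> Hom C y' y)"
  unfolding FC_def Hom_def by auto

lemma Arr_FCE:
  assumes "t \<in> Arr (FC C)"
  obtains \<alpha> u v x y x' y' where "t = (\<alpha>, u, v)"
    "\<alpha> \<in> Hom C y x" "u \<in> Hom C x x'" "v \<in> Hom C y' y"
  using assms by (cases t) (auto simp: Arr_FC_iff)

lemma Arr_FC_composableE:
  assumes C: "category C" and "s \<in> Arr (FC C)" "t \<in> Arr (FC C)" and st: "Cod (FC C) s = Dom (FC C) t"
  obtains \<alpha> u v u' v' x y x' y' x'' y'' where "s = (\<alpha>, u, v)" "t = (Comp C u (Comp C \<alpha> v), u', v')"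
    "\<alpha> \<in> Hom C y x" "u \<in> Hom C x x'" "v \<in> Hom C y' y" "u' \<in> Hom C x' x''" "v' \<in> Hom C y'' y'"
proof -
  from \<open>s \<in> Arr (FC C)\<close> obtain \<alpha> u v x y x' y' where s: "s = (\<alpha>, u, v)"
    and \<alpha>: "\<alpha> \<in> Hom C y x" and u: "u \<in> Hom C x x'" and v: "v \<in> Hom C y' y"
    by (rule Arr_FCE)
  from \<open>t \<in> Arr (FC C)\<close> obtain \<alpha>' u' v' x\<^sub>1 y\<^sub>1 x'' y'' where t: "t = (\<alpha>', u', v')"
    and \<alpha>': "\<alpha>' \<in> Hom C y\<^sub>1 x\<^sub>1" and u': "u' \<in> Hom C x\<^sub>1 x''" and v': "v' \<in> Hom C y'' y\<^sub>1"
    by (rule Arr_FCE)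
  have \<alpha>'_eq: "\<alpha>' = Comp C u (Comp C \<alpha> v)" using st by (simp add: s t FC_simps)
  with sandwich_in_Hom[OF C \<alpha> u v] \<alpha>' have "x\<^sub>1 = x'" "y\<^sub>1 = y'" by (auto simp: Hom_def)
  with u' v' show thesis
    using that[OF s t[unfolded \<alpha>'_eq] \<alpha> u v] by simp
qed

lemma FC_Comp_assoc:
  assumes C: "category C" and r: "r \<in> Arr (FC C)" and s: "s \<in> Arr (FC C)" and t: "t \<in> Arr (FC C)"
    and rs: "Cod (FC C) r = Dom (FC C) s" and st: "Cod (FC C) s = Dom (FC C) t"
  shows "Comp (FC C) t (Comp (FC C) s r) = Comp (FC C) (Comp (FC C) t s) r"
proof -
  obtain \<alpha> u v u' v' x y x' y' x'' y'' where r_eq: "r = (\<alpha>, u, v)"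
    and s_eq: "s = (Comp C u (Comp C \<alpha> v), u', v')"
    and u: "u \<in> Hom C x x'" and v: "v \<in> Hom C y' y"
    and u': "u' \<in> Hom C x' x''" and v': "v' \<in> Hom C y'' y'"
    using Arr_FC_composableE[OF C r s rs] .
  obtain u\<^sub>1 v\<^sub>1 u'' v'' x\<^sub>1 y\<^sub>1 x\<^sub>2 y\<^sub>2 x''' y''' where s_eq': "s = (Comp C u (Comp C \<alpha> v), u\<^sub>1, v\<^sub>1)"
    and t_eq: "t = (Comp C u\<^sub>1 (Comp C (Comp C u (Comp C \<alpha> v)) v\<^sub>1), u'', v'')"
    and u\<^sub>1: "u\<^sub>1 \<in> Hom C x\<^sub>1 x\<^sub>2" and v\<^sub>1: "v\<^sub>1 \<in> Hom C y\<^sub>2 y\<^sub>1"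
    and u'': "u'' \<in> Hom C x\<^sub>2 x'''" and v'': "v'' \<in> Hom C y''' y\<^sub>2"
    by (rule Arr_FC_composableE[OF C s t st]) (auto simp: s_eq)
  have "u\<^sub>1 = u'" "v\<^sub>1 = v'" using s_eq s_eq' by simp_all
  with u\<^sub>1 v\<^sub>1 u' v' u'' v'' have u'': "u'' \<in> Hom C x'' x'''" and v'': "v'' \<in> Hom C y''' y''"
    by (auto simp: Hom_def)
  have "Comp C u'' (Comp C u' u) = Comp C (Comp C u'' u') u"
    "Comp C (Comp C v v') v'' = Comp C v (Comp C v' v'')"
    using Hom_assoc[OF C u u' u''] Hom_assoc[OF C v'' v' v] by simp_all
  then show ?thesis
    using \<open>u\<^sub>1 = u'\<close> \<open>v\<^sub>1 = v'\<close> by (simp add: r_eq s_eq t_eq FC_simps)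
qed

lemma category_FC:
  assumes C: "category C"
  shows "category (FC C)"
  unfolding category_def
proof (intro conjI ballI impI)
  fix t assume "t \<in> Arr (FC C)"
  then obtain \<alpha> u v x y x' y' where t: "t = (\<alpha>, u, v)"
    and \<alpha>: "\<alpha> \<in> Hom C y x" and u: "u \<in> Hom C x x'" and v: "v \<in> Hom C y' y"
    by (rule Arr_FCE)
  show "Dom (FC C) t \<in> Obj (FC C)" "Cod (FC C) t \<in> Obj (FC C)"
    using sandwich_in_Hom[OF C \<alpha> u v] \<alpha> by (auto simp: t FC_simps Hom_def)
  show "Comp (FC C) t (Idt (FC C) (Dom (FC C) t)) = t" "Comp (FC C) (Idt (FC C) (Cod (FC C) t)) t = t"
    using sandwich_in_Hom[OF C \<alpha> u v] \<alpha> u v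
    by (auto simp: t FC_simps Hom_def Hom_Idt_left[OF C] Hom_Idt_right[OF C])
next
  fix \<alpha> assume "\<alpha> \<in> Obj (FC C)"
  then have \<alpha>: "\<alpha> \<in> Hom C (Dom C \<alpha>) (Cod C \<alpha>)"
    by (simp add: FC_simps Arr_in_Hom)
  have ids: "Idt C (Cod C \<alpha>) \<in> Hom C (Cod C \<alpha>) (Cod C \<alpha>)" "Idt C (Dom C \<alpha>) \<in> Hom C (Dom C \<alpha>) (Dom C \<alpha>)"
    using Hom_objs[OF C \<alpha>] Idt_in_Hom[OF C] by auto
  then show "Idt (FC C) \<alpha> \<in> Arr (FC C)"
    using \<alpha> by (auto simp: FC_simps Arr_FC_iff)
  show "Dom (FC C) (Idt (FC C) \<alpha>) = \<alpha>" "Cod (FC C) (Idt (FC C) \<alpha>) = \<alpha>"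
    using \<alpha> ids by (simp_all add: FC_simps Hom_Idt_left[OF C] Hom_Idt_right[OF C])
next
  fix s t assume "s \<in> Arr (FC C)" "t \<in> Arr (FC C)" "Cod (FC C) s = Dom (FC C) t"
  then obtain \<alpha> u v u' v' x y x' y' x'' y'' where s: "s = (\<alpha>, u, v)" and t: "t = (Comp C u (Comp C \<alpha> v), u', v')"
    and \<alpha>: "\<alpha> \<in> Hom C y x" and u: "u \<in> Hom C x x'" and v: "v \<in> Hom C y' y"
    and u': "u' \<in> Hom C x' x''" and v': "v' \<in> Hom C y'' y'"
    by (rule Arr_FC_composableE[OF C])
  show "Comp (FC C) t s \<in> Arr (FC C)"
    using Hom_comp[OF C u u'] Hom_comp[OF C v' v] \<alpha> by (auto simp: s t FC_simps Arr_FC_iff)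
  show "Dom (FC C) (Comp (FC C) t s) = Dom (FC C) s"
    by (simp add: s t FC_simps)
  show "Cod (FC C) (Comp (FC C) t s) = Cod (FC C) t"
    using sandwich_sandwich[OF C \<alpha> u v u' v'] by (simp add: s t FC_simps)
qed (rule FC_Comp_assoc[OF C])

section \<open>The module Res_\<tau>(k\<C>)\<close>

definition supp :: "('a \<Rightarrow> 'k::zero) \<Rightarrow> 'a set" where
  "supp f = {\<beta>. f \<beta> \<noteq> 0}"

definition augmentation :: "('a \<Rightarrow> 'k::comm_monoid_add) \<Rightarrow> 'k" where
  "augmentation f = (\<Sum>\<beta>\<in>supp f. f \<beta>)"

definition basis_vec :: "'a \<Rightarrow> 'a \<Rightarrow> 'k::zero_neq_one" where
  "basis_vec \<alpha> \<beta> = (if \<beta> = \<alpha> then 1 else 0)"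

lemma kC_ob_iff: "f \<in> kC_ob C \<alpha> \<longleftrightarrow> finite (supp f) \<and> supp f \<subseteq> Hom C (Dom C \<alpha>) (Cod C \<alpha>)"
  by (simp add: kC_ob_def supp_def)

lemma supp_add: "supp (f + g :: 'a \<Rightarrow> 'k::monoid_add) \<subseteq> supp f \<union> supp g"
  by (auto simp: supp_def)

lemma supp_fsc: "supp (fsc c f) \<subseteq> supp f"
  by (auto simp: supp_def fsc_def)

lemma supp_basis_vec [simp]: "supp (basis_vec \<alpha>) = {\<alpha>}"
  by (auto simp: supp_def basis_vec_def)

lemma module_fsc: "module (fsc :: 'k::field \<Rightarrow> ('a \<Rightarrow> 'k) \<Rightarrow> _)"
  by unfold_locales (auto simp: fsc_def fun_eq_iff algebra_simps)

lemma subspace_kC_ob: "subspace_on (fsc :: 'k::field \<Rightarrow> _) (kC_ob C \<alpha> :: ('a \<Rightarrow> 'k) set)"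
  unfolding subspace_on_def
proof (intro conjI ballI allI)
  show "0 \<in> kC_ob C \<alpha>" by (simp add: kC_ob_iff supp_def)
next
  fix f g :: "'a \<Rightarrow> 'k" assume "f \<in> kC_ob C \<alpha>" "g \<in> kC_ob C \<alpha>"
  with supp_add[of f g] show "f + g \<in> kC_ob C \<alpha>"
    by (auto simp: kC_ob_iff intro: finite_subset)
next
  fix c and f :: "'a \<Rightarrow> 'k" assume "f \<in> kC_ob C \<alpha>"
  with supp_fsc[of c f] show "fsc c f \<in> kC_ob C \<alpha>"
    by (auto simp: kC_ob_iff intro: finite_subset)
qed

lemma augmentation_eq_sum: "finite A \<Longrightarrow> supp f \<subseteq> A \<Longrightarrow> augmentation f = sum f A"
  unfolding augmentation_def by (rule sum.mono_neutral_left) (auto simp: supp_def)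

lemma augmentation_add:
  assumes "finite (supp f)" "finite (supp g)"
  shows "augmentation (f + g) = augmentation f + augmentation g"
  using assms supp_add[of f g]
  by (simp add: augmentation_eq_sum[of "supp f \<union> supp g"] sum.distrib)

lemma augmentation_fsc: "finite (supp f) \<Longrightarrow> augmentation (fsc c f) = c * augmentation f"
  using supp_fsc[of c f]
  by (simp add: augmentation_eq_sum[of "supp f"] fsc_def sum_distrib_left)

lemma augmentation_basis_vec [simp]: "augmentation (basis_vec \<alpha>) = 1"
  by (simp add: augmentation_def basis_vec_def)

lemma kC_ar_eq_sum:
  assumes "finite A" "supp f \<subseteq> A"
  shows "kC_ar C (\<alpha>, u, v) f \<gamma> = (\<Sum>\<beta>\<in>{\<beta>\<in>A. Comp C u (Comp C \<beta> v) = \<gamma>}. f \<beta>)"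
  unfolding kC_ar_def using assms
  by (auto simp: supp_def intro!: sum.mono_neutral_left)

lemma supp_kC_ar: "supp (kC_ar C (\<alpha>, u, v) f) \<subseteq> (\<lambda>\<beta>. Comp C u (Comp C \<beta> v)) ` supp f"
  unfolding supp_def kC_ar_def by (force intro: sum.neutral)

lemma kC_ar_add:
  assumes "finite (supp f)" "finite (supp g)"
  shows "kC_ar C (\<alpha>, u, v) (f + g) = kC_ar C (\<alpha>, u, v) f + kC_ar C (\<alpha>, u, v) g"
  using assms supp_add[of f g]
  by (simp add: fun_eq_iff kC_ar_eq_sum[of "supp f \<union> supp g"] sum.distrib)

lemma kC_ar_fsc:
  assumes "finite (supp f)"
  shows "kC_ar C (\<alpha>, u, v) (fsc c f) = fsc c (kC_ar C (\<alpha>, u, v) f)"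
  using assms supp_fsc[of c f]
  by (simp add: fun_eq_iff kC_ar_eq_sum[of "supp f"] fsc_def sum_distrib_left)

lemma kC_ar_basis_vec: "kC_ar C (\<alpha>, u, v) (basis_vec \<alpha>) = basis_vec (Comp C u (Comp C \<alpha> v))"
proof
  fix \<gamma>
  have "kC_ar C (\<alpha>, u, v) (basis_vec \<alpha>) \<gamma> = (\<Sum>\<beta>\<in>{\<beta>\<in>{\<alpha>}. Comp C u (Comp C \<beta> v) = \<gamma>}. basis_vec \<alpha> \<beta>)"
    by (rule kC_ar_eq_sum) simp_all
  also have "{\<beta>\<in>{\<alpha>}. Comp C u (Comp C \<beta> v) = \<gamma>} = (if Comp C u (Comp C \<alpha> v) = \<gamma> then {\<alpha>} else {})"
    by auto
  also have "(\<Sum>\<beta>\<in>\<dots>. basis_vec \<alpha> \<beta>) = basis_vec (Comp C u (Comp C \<alpha> v)) \<gamma>"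
    by (simp add: basis_vec_def)
  finally show "kC_ar C (\<alpha>, u, v) (basis_vec \<alpha>) \<gamma> = basis_vec (Comp C u (Comp C \<alpha> v)) \<gamma>" .
qed

lemma kC_ar_eq_self:
  assumes "finite (supp f)" and fixed: "\<And>\<beta>. \<beta> \<in> supp f \<Longrightarrow> Comp C u (Comp C \<beta> v) = \<beta>"
  shows "kC_ar C (\<alpha>, u, v) f = f"
proof
  fix \<gamma>
  have "kC_ar C (\<alpha>, u, v) f \<gamma> = sum f {\<beta>\<in>supp f. Comp C u (Comp C \<beta> v) = \<gamma>}"
    using assms(1) by (rule kC_ar_eq_sum) simp
  also have "{\<beta>\<in>supp f. Comp C u (Comp C \<beta> v) = \<gamma>} = (if \<gamma> \<in> supp f then {\<gamma>} else {})"
    using fixed by auto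
  also have "sum f \<dots> = f \<gamma>"
    by (simp add: supp_def)
  finally show "kC_ar C (\<alpha>, u, v) f \<gamma> = f \<gamma>" .
qed

lemma augmentation_kC_ar:
  assumes "finite (supp f)"
  shows "augmentation (kC_ar C (\<alpha>, u, v) f) = augmentation f"
proof -
  let ?h = "\<lambda>\<beta>. Comp C u (Comp C \<beta> v)"
  have "augmentation (kC_ar C (\<alpha>, u, v) f) = (\<Sum>\<gamma>\<in>?h ` supp f. kC_ar C (\<alpha>, u, v) f \<gamma>)"
    using assms supp_kC_ar[of C \<alpha> u v f] by (intro augmentation_eq_sum) auto
  also have "\<dots> = (\<Sum>\<gamma>\<in>?h ` supp f. \<Sum>\<beta>\<in>{\<beta>\<in>supp f. ?h \<beta> = \<gamma>}. f \<beta>)"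
    using assms by (simp add: kC_ar_eq_sum[of "supp f"])
  also have "\<dots> = augmentation f"
    using sum.image_gen[OF assms, of f ?h] by (simp add: augmentation_def)
  finally show ?thesis .
qed

lemma kC_ar_kC_ar:
  assumes fin: "finite (supp f)"
    and comp: "\<And>\<beta>. \<beta> \<in> supp f \<Longrightarrow>
      Comp C u' (Comp C (Comp C u (Comp C \<beta> v)) v') = Comp C u'' (Comp C \<beta> v'')"
  shows "kC_ar C (\<alpha>', u', v') (kC_ar C (\<alpha>, u, v) f) = kC_ar C (\<alpha>, u'', v'') f"
proof
  fix \<gamma>
  let ?h = "\<lambda>\<beta>. Comp C u (Comp C \<beta> v)" and ?h' = "\<lambda>\<delta>. Comp C u' (Comp C \<delta> v')"
  let ?S = "supp f"
  let ?T = "{\<beta>\<in>?S. ?h' (?h \<beta>) = \<gamma>}"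
  have "kC_ar C (\<alpha>', u', v') (kC_ar C (\<alpha>, u, v) f) \<gamma>
      = (\<Sum>\<delta>\<in>{\<delta>\<in>?h ` ?S. ?h' \<delta> = \<gamma>}. kC_ar C (\<alpha>, u, v) f \<delta>)"
    using fin supp_kC_ar[of C \<alpha> u v f] by (intro kC_ar_eq_sum) auto
  also have "\<dots> = (\<Sum>\<delta>\<in>?h ` ?T. sum f {\<beta>\<in>?T. ?h \<beta> = \<delta>})"
  proof (rule sum.cong)
    show "{\<delta>\<in>?h ` ?S. ?h' \<delta> = \<gamma>} = ?h ` ?T" by auto
  next
    fix \<delta> assume "\<delta> \<in> ?h ` ?T"
    then have "{\<beta>\<in>?T. ?h \<beta> = \<delta>} = {\<beta>\<in>?S. ?h \<beta> = \<delta>}" by auto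
    with fin show "kC_ar C (\<alpha>, u, v) f \<delta> = sum f {\<beta>\<in>?T. ?h \<beta> = \<delta>}"
      by (simp add: kC_ar_eq_sum[of ?S])
  qed
  also have "\<dots> = sum f ?T"
    using fin by (intro sum.image_gen[symmetric]) auto
  also have "?T = {\<beta>\<in>?S. Comp C u'' (Comp C \<beta> v'') = \<gamma>}"
    using comp by auto
  also have "sum f \<dots> = kC_ar C (\<alpha>, u'', v'') f \<gamma>"
    using fin by (intro kC_ar_eq_sum[symmetric]) auto
  finally show "kC_ar C (\<alpha>', u', v') (kC_ar C (\<alpha>, u, v) f) \<gamma> = kC_ar C (\<alpha>, u'', v'') f \<gamma>" .
qed

lemma kC_ar_in_kC_ob:
  assumes C: "category C" and \<alpha>: "\<alpha> \<in> Hom C y x" and u: "u \<in> Hom C x x'" and v: "v \<in> Hom C y' y"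
    and f: "f \<in> kC_ob C \<alpha>"
  shows "kC_ar C (\<alpha>, u, v) f \<in> kC_ob C (Comp C u (Comp C \<alpha> v))"
proof -
  have "finite (supp f)" and "supp f \<subseteq> Hom C y x"
    using f \<alpha> by (auto simp: kC_ob_iff Hom_def)
  moreover have "Comp C u (Comp C \<alpha> v) \<in> Hom C y' x'"
    by (rule sandwich_in_Hom[OF C \<alpha> u v])
  ultimately show ?thesis
    using supp_kC_ar[of C \<alpha> u v f] sandwich_in_Hom[OF C _ u v]
    by (auto simp: kC_ob_iff Hom_def intro: finite_subset)
qed

lemma kC_ar_Idt:
  assumes C: "category C" and m: "m \<in> kC_ob C \<alpha>"
  shows "kC_ar C (\<alpha>, Idt C (Cod C \<alpha>), Idt C (Dom C \<alpha>)) m = m"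
proof (rule kC_ar_eq_self)
  show "finite (supp m)" using m by (simp add: kC_ob_iff)
  fix \<beta> assume "\<beta> \<in> supp m"
  with m have "\<beta> \<in> Hom C (Dom C \<alpha>) (Cod C \<alpha>)" by (auto simp: kC_ob_iff)
  then show "Comp C (Idt C (Cod C \<alpha>)) (Comp C \<beta> (Idt C (Dom C \<alpha>))) = \<beta>"
    using Hom_Idt_right[OF C] Hom_Idt_left[OF C] by simp
qed

lemma cat_module_kC:
  fixes C :: "('o, 'a, 'z) cat_scheme"
  assumes C: "category C"
  shows "cat_module (FC C) (fsc :: 'k::field \<Rightarrow> _) (kC_ob C) (kC_ar C)"
  unfolding cat_module_def
proof (intro conjI ballI allI impI)
  fix \<alpha> show "subspace_on fsc (kC_ob C \<alpha> :: ('a \<Rightarrow> 'k) set)"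
    by (rule subspace_kC_ob)
next
  fix t and m :: "'a \<Rightarrow> 'k" assume t: "t \<in> Arr (FC C)" and m: "m \<in> kC_ob C (Dom (FC C) t)"
  from t obtain \<alpha> u v x y x' y' where "t = (\<alpha>, u, v)"
    and "\<alpha> \<in> Hom C y x" "u \<in> Hom C x x'" "v \<in> Hom C y' y"
    by (rule Arr_FCE)
  with m show "kC_ar C t m \<in> kC_ob C (Cod (FC C) t)"
    using kC_ar_in_kC_ob[OF C] by (simp add: FC_simps)
next
  fix t assume "t \<in> Arr (FC C)"
  then obtain \<alpha> u v where "t = (\<alpha>, u, v)" by (rule Arr_FCE)
  then show "linear_on fsc fsc (kC_ob C (Dom (FC C) t) :: ('a \<Rightarrow> 'k) set) (kC_ar C t)"
    by (auto simp: linear_on_def kC_ob_iff kC_ar_add kC_ar_fsc)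
next
  fix \<alpha> and m :: "'a \<Rightarrow> 'k" assume "\<alpha> \<in> Obj (FC C)" "m \<in> kC_ob C \<alpha>"
  then show "kC_ar C (Idt (FC C) \<alpha>) m = m"
    by (simp add: FC_simps kC_ar_Idt[OF C])
next
  fix s t and m :: "'a \<Rightarrow> 'k"
  assume st: "s \<in> Arr (FC C)" "t \<in> Arr (FC C)" "Cod (FC C) s = Dom (FC C) t"
    and m: "m \<in> kC_ob C (Dom (FC C) s)"
  obtain \<alpha> u v u' v' x y x' y' x'' y'' where s: "s = (\<alpha>, u, v)" and t: "t = (Comp C u (Comp C \<alpha> v), u', v')"
    and \<alpha>: "\<alpha> \<in> Hom C y x" and u: "u \<in> Hom C x x'" and v: "v \<in> Hom C y' y"
    and u': "u' \<in> Hom C x' x''" and v': "v' \<in> Hom C y'' y'"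
    using Arr_FC_composableE[OF C st] .
  have supp_m: "finite (supp m)" "supp m \<subseteq> Hom C y x"
    using m \<alpha> by (auto simp: s FC_simps kC_ob_iff Hom_def)
  show "kC_ar C (Comp (FC C) t s) m = kC_ar C t (kC_ar C s m)"
    unfolding s t FC_simps
    by (rule kC_ar_kC_ar[symmetric, OF supp_m(1) sandwich_sandwich[OF C _ u v u' v']])
      (use supp_m in blast)
qed

lemma hom_to_triv_augmentation:
  fixes C :: "('o, 'a, 'z) cat_scheme"
  shows "hom_to_triv (FC C) (fsc :: 'k::field \<Rightarrow> _) (kC_ob C) (kC_ar C) (\<lambda>_. augmentation)"
  unfolding hom_to_triv_def
proof (intro conjI ballI)
  fix \<alpha> show "linear_on fsc (*) (kC_ob C \<alpha> :: ('a \<Rightarrow> 'k) set) augmentation"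
    by (auto simp: linear_on_def kC_ob_iff augmentation_add augmentation_fsc)
next
  fix t and m :: "'a \<Rightarrow> 'k" assume "t \<in> Arr (FC C)" "m \<in> kC_ob C (Dom (FC C) t)"
  then show "augmentation (kC_ar C t m) = triv_ar t (augmentation m)"
    by (cases t) (simp add: FC_simps kC_ob_iff augmentation_kC_ar triv_ar_def)
qed

theorem lemma2p3p3:
  fixes C :: "('o, 'a) cat"
  assumes "category C"
  shows "\<exists>Nob Nar. cat_module (FC C) (fsc :: 'k::field \<Rightarrow> _) Nob Nar \<and>
           iso_triv_plus (FC C) fsc (kC_ob C) (kC_ar C) Nob Nar"
proof -
  note M = cat_module_kC[OF assms, where 'k = 'k]
  note \<epsilon> = hom_to_triv_augmentation[of C, where 'k = 'k]
  have basis_vec: "basis_vec \<alpha> \<in> kC_ob C \<alpha> \<and> augmentation (basis_vec \<alpha> :: 'a \<Rightarrow> 'k) = 1"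
    if "\<alpha> \<in> Obj (FC C)" for \<alpha>
    using that by (simp add: FC_simps kC_ob_iff Hom_def)
  have basis_vec_natural: "kC_ar C t (basis_vec (Dom (FC C) t)) = (basis_vec (Cod (FC C) t) :: 'a \<Rightarrow> 'k)"
    for t
    by (cases t) (simp add: FC_simps kC_ar_basis_vec)
  show ?thesis
    using cat_module_kernel[OF M \<epsilon>]
      iso_triv_plus_kernel[OF module_fsc category_FC[OF assms] M \<epsilon> basis_vec basis_vec_natural]
    by blast
qed

end
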